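(* Let $X$ be a separable real Hilbert space, $A$ the generator of a $C_0$-semigroup $(T(t))$ with $\|T(t)\|\le Me^{-\nu t}$ ($M\ge1,\nu>0$), $N_1,\dots,N_n\in\mathcal L(X)$, $\mathcal H$ a separable Hilbert space, $C\in\mathcal L(X,\mathcal H)$, and assume $M^2\Gamma^2(2\nu)^{-1}<1$ with $\Gamma=(\sum_i\|N_iN_i^*\|)^{1/2}$. Let $\varphi_0\in\ker(\mathscr O)$, $T_0>0$, $u\in L^2((0,T_0),\mathbb R^n)$, and let $\varphi\in C([0,T_0],X)$ be the mild solution of the homogeneous system $\varphi'(t)=A\varphi(t)+\sum_{i=1}^nN_i\varphi(t)u_i(t)$, $\varphi(0)=\varphi_0$, i.e. $\varphi(t)=T(t)\varphi_0+\int_0^tT(t-s)\sum_iu_i(s)N_i\varphi(s)ds$. Then $C\varphi(t)=0$ for all $t\in[0,T_0]$.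
   Context: With $\widehat e_i$ the standard basis of $\mathbb R^n$: $O_0(t_1)=CT(t_1)$ and for $k\ge1$, $t\in(0,\infty)^{k+1}$, $O_k(t)y=\sum_{n_1,\dots,n_k}CT(t_1)N_{n_1}T(t_2)\cdots N_{n_k}T(t_{k+1})y\otimes(\widehat e_{n_1}\otimes\dots\otimes\widehat e_{n_k})$. The observability gramian $\mathscr O\in\mathcal L(X)$ is given by $\langle x,\mathscr Oy\rangle=\sum_{k\ge0}\int_{(0,\infty)^{k+1}}\langle O_k(s)x,O_k(s)y\rangle ds$. *)

theory Defs
  imports "HOL-Analysis.Analysis"
begin

definition C0_semigroup :: "(real \<Rightarrow> 'x::real_normed_vector \<Rightarrow> 'x) \<Rightarrow> bool" where
  "C0_semigroup T \<longleftrightarrow>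
     (\<forall>t\<ge>0. bounded_linear (T t)) \<and>
     T 0 = id \<and>
     (\<forall>s\<ge>0. \<forall>t\<ge>0. T (s + t) = T s \<circ> T t) \<and>
     (\<forall>x. ((\<lambda>t. T t x) \<longlongrightarrow> x) (at_right 0))"

text \<open>The operator  T(s_0) N_{m 1} T(s_1) ... N_{m k} T(s_k)
  (times s_0..s_k play the role of t_1..t_{k+1}; indices m 1..m k those of n_1..n_k).\<close>
fun opchain :: "(real \<Rightarrow> 'x \<Rightarrow> 'x) \<Rightarrow> (nat \<Rightarrow> 'x \<Rightarrow> 'x) \<Rightarrow> (nat \<Rightarrow> real) \<Rightarrow> (nat \<Rightarrow> nat) \<Rightarrow> nat \<Rightarrow> 'x \<Rightarrow> 'x" where
  "opchain T N s m 0 = T (s 0)"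
| "opchain T N s m (Suc k) = opchain T N s m k \<circ> N (m (Suc k)) \<circ> T (s (Suc k))"

text \<open>\<langle>O_k(s)x, O_k(s)y\<rangle> in H \<otimes> (R^n)^{\<otimes>k}: the basis tensors are orthonormal,
  so this is the sum over all multi-indices of the inner products in H.
  The inputs N are indexed by 0..n-1.\<close>
definition Ok_inner :: "('x \<Rightarrow> 'h::real_inner) \<Rightarrow> (real \<Rightarrow> 'x \<Rightarrow> 'x) \<Rightarrow> (nat \<Rightarrow> 'x \<Rightarrow> 'x) \<Rightarrow> nat
     \<Rightarrow> nat \<Rightarrow> (nat \<Rightarrow> real) \<Rightarrow> 'x \<Rightarrow> 'x \<Rightarrow> real" where
  "Ok_inner C T N n k s x y =
     (\<Sum>m\<in>PiE {1..k} (\<lambda>_. {..<n}). inner (C (opchain T N s m k x)) (C (opchain T N s m k y)))"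

definition obs_gram :: "('x \<Rightarrow> 'h::real_inner) \<Rightarrow> (real \<Rightarrow> 'x \<Rightarrow> 'x) \<Rightarrow> (nat \<Rightarrow> 'x \<Rightarrow> 'x) \<Rightarrow> nat
     \<Rightarrow> 'x \<Rightarrow> 'x \<Rightarrow> real" where
  "obs_gram C T N n x y =
     (\<Sum>k. \<integral>s. Ok_inner C T N n k s x y
              \<partial>(\<Pi>\<^sub>M j\<in>{..k}. restrict_space lborel {0<..}))"

text \<open>Kernel of the gramian: \<O> y = 0 iff \<langle>x, \<O> y\<rangle> = 0 for all x.\<close>
definition obs_kernel :: "('x \<Rightarrow> 'h::real_inner) \<Rightarrow> (real \<Rightarrow> 'x \<Rightarrow> 'x) \<Rightarrow> (nat \<Rightarrow> 'x \<Rightarrow> 'x) \<Rightarrow> nat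
     \<Rightarrow> 'x set" where
  "obs_kernel C T N n = {y. \<forall>x. obs_gram C T N n x y = 0}"

end

theory Submission
  imports Defs "HOL-Probability.Sinc_Integral"
begin

text \<open>
  Call a state x unobservable if C T(t_1) N_(n_1) T(t_2) ... N_(n_k) T(t_(k+1)) x = 0 for all indices
  and all nonnegative times. For x in the kernel of the gramian, the quadratic form of the gramian at
  x is a series of integrals of nonnegative functions of the times, dominated by a geometric series
  of ratio M^2 \<Gamma>^2 / (2\<nu>) < 1. Hence every term vanishes, the integrands vanish almost
  everywhere, and by continuity in the times x is unobservable.

  Along the mild solution, Duhamel's formula writes every chain applied to \<phi>(t) as an integral over
  r \<le> t of u_i(r) times chains with one more factor applied to \<phi>(r). Suppose \<phi>(r) is unobservable
  for r < \<tau>, and normalise the chains of length k by their a priori growth M^(k+1) B^k, where B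
  bounds the norms of the N_i. On a window [\<tau>, \<tau> + \<delta>], where \<delta> depends only on M, B and
  the L^2 norm of u, one application of Duhamel's formula halves the normalised bound, so the chains
  vanish on the window; finitely many windows cover [0, T0]. The chain with k = 0 and t_1 = 0 is
  C \<phi>(t).
\<close>

lemma le_of_square_le_mult:
  fixes x b :: real
  assumes "x^2 \<le> b * x" "0 \<le> x" "0 \<le> b"
  shows "x \<le> b"
  using assms by (cases "x = 0") (auto simp: power2_eq_square mult_le_cancel_right)

lemma abs_le_add_square_div:
  fixes x L :: real
  assumes "0 < L"
  shows "\<bar>x\<bar> \<le> L + x^2 / L"
proof -
  have "0 \<le> (\<bar>x\<bar> - L)^2" by simp
  hence "2 * (\<bar>x\<bar> * L) \<le> L^2 + x^2" by (simp add: power2_eq_square algebra_simps)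
  moreover have "0 \<le> \<bar>x\<bar> * L" using assms by simp
  ultimately have "\<bar>x\<bar> * L \<le> L^2 + x^2" by linarith
  thus ?thesis using assms by (simp add: field_simps power2_eq_square)
qed

section \<open>Riesz representation and adjoints on Hilbert spaces\<close>

lemma norm_diff_sq_le_convex:
  fixes S :: "'a::real_inner set"
  assumes "convex S" "y \<in> S" "z \<in> S" and d: "\<And>w. w \<in> S \<Longrightarrow> d \<le> norm (a - w)^2"
  shows "norm (y - z)^2 \<le> 2 * norm (a - y)^2 + 2 * norm (a - z)^2 - 4 * d"
proof -
  have "(1/2) *\<^sub>R (y + z) \<in> S"
    using assms(1-3) by (auto simp: scaleR_add_right intro!: convexD[of S, where u="1/2" and v="1/2", simplified])
  hence "d \<le> norm (a - (1/2) *\<^sub>R (y + z))^2" by (rule d)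
  moreover have "norm (y - z)^2 + 4 * norm (a - (1/2) *\<^sub>R (y + z))^2
      = 2 * norm (a - y)^2 + 2 * norm (a - z)^2"
    \<comment> \<open>the parallelogram law\<close>
    by (simp add: power2_norm_eq_inner inner_commute algebra_simps)
  ultimately show ?thesis by linarith
qed

lemma hilbert_closest_point_exists:
  fixes S :: "'a::{real_inner,complete_space} set"
  assumes S: "closed S" "convex S" "S \<noteq> {}"
  obtains p where "p \<in> S" "\<And>y. y \<in> S \<Longrightarrow> norm (a - p) \<le> norm (a - y)"
proof -
  define D where "D = (\<lambda>y. norm (a - y)^2) ` S"
  define d where "d = Inf D"
  have bdd: "bdd_below D" unfolding D_def by (rule bdd_belowI[of _ 0]) auto
  have d_le: "d \<le> norm (a - y)^2" if "y \<in> S" for y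
    unfolding d_def D_def using bdd that by (auto simp: D_def intro!: cInf_lower)
  have "\<exists>y\<in>S. norm (a - y)^2 < d + inverse (Suc k)" for k
    using cInf_less_iff[OF _ bdd, of "d + inverse (Suc k)"] S(3) by (auto simp: d_def D_def)
  then obtain y where y: "\<And>k. y k \<in> S" "\<And>k. norm (a - y k)^2 < d + inverse (Suc k)"
    by metis
  have y_close: "norm (y k - y l)^2 \<le> 2 * inverse (Suc k) + 2 * inverse (Suc l)" for k l
    using norm_diff_sq_le_convex[OF S(2) y(1)[of k] y(1)[of l] d_le] y(2)[of k] y(2)[of l] by linarith
  have "Cauchy y"
  proof (rule CauchyI)
    fix e :: real assume e: "e > 0"
    obtain K where K: "inverse (real (Suc K)) < e^2 / 4" using reals_Archimedean[of "e^2 / 4"] e by auto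
    show "\<exists>K. \<forall>k\<ge>K. \<forall>l\<ge>K. norm (y k - y l) < e"
    proof (intro exI allI impI)
      fix k l assume "k \<ge> K" "l \<ge> K"
      hence "inverse (real (Suc k)) \<le> inverse (real (Suc K))" "inverse (real (Suc l)) \<le> inverse (real (Suc K))"
        by (auto simp: field_simps)
      hence "norm (y k - y l)^2 < e^2" using y_close[of k l] K by linarith
      thus "norm (y k - y l) < e" using e by (simp add: power_less_imp_less_base)
    qed
  qed
  then obtain p where p: "y \<longlonglongrightarrow> p" using convergent_eq_Cauchy by blast
  have "p \<in> S" using closed_sequentially[OF S(1) y(1) p] .
  moreover have "norm (a - p)^2 \<le> d"
  proof (rule LIMSEQ_le)
    show "(\<lambda>k. norm (a - y k)^2) \<longlonglongrightarrow> norm (a - p)^2" using p by (intro tendsto_intros)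
    show "(\<lambda>k. d + inverse (real (Suc k))) \<longlonglongrightarrow> d"
      using tendsto_add[OF tendsto_const LIMSEQ_inverse_real_of_nat] by simp
  qed (use y(2) less_imp_le in auto)
  ultimately show ?thesis
    using that d_le by (meson norm_ge_zero order_trans power2_le_imp_le)
qed

lemma orthogonal_projection_exists:
  fixes K :: "'a::{real_inner,complete_space} set"
  assumes "closed K" "subspace K"
  obtains p where "p \<in> K" "\<And>k. k \<in> K \<Longrightarrow> inner (x - p) k = 0"
proof -
  obtain p where p: "p \<in> K" "\<And>y. y \<in> K \<Longrightarrow> norm (x - p) \<le> norm (x - y)"
    using hilbert_closest_point_exists[of K x] assms subspace_imp_convex subspace_0 by blast
  have "inner (x - p) k = 0" if k: "k \<in> K" for k
  proof (cases "k = 0")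
    case False
    define c where "c = inner (x - p) k"
    define t where "t = c / norm k^2"
    have "p + t *\<^sub>R k \<in> K" using p(1) k assms(2) by (simp add: subspace_add subspace_scale)
    hence "norm (x - p)^2 \<le> norm (x - p - t *\<^sub>R k)^2"
      using p(2) by (fastforce simp: algebra_simps intro: power_mono)
    also have "\<dots> = norm (x - p)^2 - 2 * t * c + t^2 * norm k^2"
      unfolding power2_norm_eq_inner by (simp add: c_def inner_commute algebra_simps power2_eq_square)
    also have "\<dots> = norm (x - p)^2 - c^2 / norm k^2"
      using False by (simp add: t_def field_simps power2_eq_square)
    finally have "c^2 / norm k^2 \<le> 0" by simp
    with False show ?thesis by (simp add: c_def divide_le_0_iff)
  qed simp
  with p(1) show ?thesis using that by blast
qed

lemma riesz_representation:
  fixes f :: "'a::{real_inner,complete_space} \<Rightarrow> real"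
  assumes f: "bounded_linear f"
  obtains z where "\<And>x. f x = inner x z"
proof (cases "\<forall>x. f x = 0")
  case True
  with that show ?thesis by (metis inner_zero_right)
next
  case False
  then obtain x0 where x0: "f x0 \<noteq> 0" by blast
  interpret f: bounded_linear f by fact
  define K where "K = {x. f x = 0}"
  have "subspace K" by (simp add: K_def subspace_def f.add f.scale)
  moreover have "closed K"
    unfolding K_def by (intro closed_Collect_eq f.continuous_on continuous_on_const continuous_on_id)
  ultimately obtain p where p: "p \<in> K" "\<And>k. k \<in> K \<Longrightarrow> inner (x0 - p) k = 0"
    using orthogonal_projection_exists by blast
  define w where "w = x0 - p"
  have fw: "f w \<noteq> 0" using p(1) x0 by (simp add: w_def f.diff K_def)
  have "f x = inner x ((f w / norm w^2) *\<^sub>R w)" for x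
  proof -
    have "x - (f x / f w) *\<^sub>R w \<in> K" using fw by (simp add: K_def f.diff f.scale)
    hence "inner w (x - (f x / f w) *\<^sub>R w) = 0" using p(2) by (simp add: w_def)
    hence "inner x w = (f x / f w) * norm w^2"
      by (simp add: inner_diff_right inner_commute power2_norm_eq_inner)
    thus ?thesis using fw by (auto simp: field_simps)
  qed
  with that show ?thesis by blast
qed

text \<open>HOL-Analysis proves the defining property of adjoint only on euclidean spaces; on a
  Hilbert space it rests on the Riesz representation theorem.\<close>

lemma adjoint_works_complete:
  fixes N :: "'a::{real_inner,complete_space} \<Rightarrow> 'b::real_inner"
  assumes "bounded_linear N"
  shows "inner x (adjoint N y) = inner (N x) y"
proof -
  have "\<exists>z. \<forall>x. inner (N x) y = inner x z" for y
    using riesz_representation[OF bounded_linear_compose[OF bounded_linear_inner_left assms]]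
    by metis
  hence "\<exists>A. \<forall>x y. inner (N x) y = inner x (A y)" by metis
  hence "\<forall>x y. inner (N x) y = inner x (adjoint N y)"
    unfolding adjoint_def by (rule someI_ex)
  thus ?thesis by simp
qed

lemma bounded_linear_adjoint:
  fixes N :: "'a::{real_inner,complete_space} \<Rightarrow> 'b::real_inner"
  assumes N: "bounded_linear N"
  shows "bounded_linear (adjoint N)"
proof (rule bounded_linear_intro)
  note adj = adjoint_works_complete[OF N]
  show "adjoint N (y + z) = adjoint N y + adjoint N z" for y z
    by (metis adj inner_add_right vector_eq_ldot)
  show "adjoint N (r *\<^sub>R y) = r *\<^sub>R adjoint N y" for r y
    by (metis adj inner_scaleR_right vector_eq_ldot)
  show "norm (adjoint N y) \<le> norm y * onorm N" for y
  proof (rule le_of_square_le_mult)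
    have "norm (adjoint N y)^2 = inner (N (adjoint N y)) y" by (simp add: adj power2_norm_eq_inner)
    also have "\<dots> \<le> onorm N * norm (adjoint N y) * norm y"
      by (rule order_trans[OF norm_cauchy_schwarz mult_right_mono[OF onorm[OF N]]]) simp
    finally show "norm (adjoint N y)^2 \<le> norm y * onorm N * norm (adjoint N y)"
      by (simp add: mult_ac)
  qed (simp_all add: onorm_pos_le[OF N])
qed

lemma norm_le_sqrt_onorm_adjoint:
  fixes N :: "'a::{real_inner,complete_space} \<Rightarrow> 'b::real_inner"
  assumes N: "bounded_linear N"
  shows "norm (N x) \<le> sqrt (onorm (N \<circ> adjoint N)) * norm x"
proof -
  note adj = adjoint_works_complete[OF N]
  define c where "c = onorm (N \<circ> adjoint N)"
  have NA: "bounded_linear (N \<circ> adjoint N)"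
    using bounded_linear_compose[OF N bounded_linear_adjoint[OF N]] by (simp add: o_def)
  have c: "0 \<le> c" unfolding c_def by (rule onorm_pos_le[OF NA])
  have A: "norm (adjoint N y) \<le> sqrt c * norm y" for y
  proof (rule real_le_rsqrt[of _ "c * norm y^2", unfolded real_sqrt_mult real_sqrt_abs abs_norm_cancel])
    have "norm (adjoint N y)^2 = inner ((N \<circ> adjoint N) y) y" by (simp add: adj power2_norm_eq_inner)
    also have "\<dots> \<le> c * norm y * norm y"
      unfolding c_def by (rule order_trans[OF norm_cauchy_schwarz mult_right_mono[OF onorm[OF NA]]]) simp
    finally show "norm (adjoint N y)^2 \<le> c * norm y^2" by (simp add: power2_eq_square mult_ac)
  qed
  show ?thesis
    unfolding c_def[symmetric]
  proof (rule le_of_square_le_mult)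
    have "norm (N x)^2 = inner x (adjoint N (N x))" by (simp add: adj power2_norm_eq_inner)
    also have "\<dots> \<le> norm x * (sqrt c * norm (N x))"
      by (rule order_trans[OF norm_cauchy_schwarz mult_left_mono[OF A]]) simp
    finally show "norm (N x)^2 \<le> sqrt c * norm x * norm (N x)" by (simp add: mult_ac)
  qed (simp_all add: c)
qed

section \<open>Exponentially stable semigroups\<close>

locale exp_stable_semigroup =
  fixes T :: "real \<Rightarrow> 'x::{real_normed_vector,second_countable_topology} \<Rightarrow> 'x"
    and M \<nu> :: real
  assumes C0: "C0_semigroup T"
    and onorm_T: "\<forall>t\<ge>0. onorm (T t) \<le> M * exp (- \<nu> * t)"
    and M_ge_1: "M \<ge> 1" and \<nu>_pos: "\<nu> > 0"
begin

lemma bounded_linear_T: "t \<ge> 0 \<Longrightarrow> bounded_linear (T t)"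
  using C0 by (simp add: C0_semigroup_def)

lemma T_0 [simp]: "T 0 x = x"
  using C0 by (simp add: C0_semigroup_def)

lemma T_add: "s \<ge> 0 \<Longrightarrow> t \<ge> 0 \<Longrightarrow> T (s + t) x = T s (T t x)"
  using C0 by (simp add: C0_semigroup_def)

lemma norm_T_le: "t \<ge> 0 \<Longrightarrow> norm (T t x) \<le> M * exp (- \<nu> * t) * norm x"
  using onorm_T by (meson bounded_linear_T mult_right_mono norm_ge_zero onorm order_trans)

lemma norm_T_le_M: "t \<ge> 0 \<Longrightarrow> norm (T t x) \<le> M * norm x"
proof -
  assume t: "t \<ge> 0"
  have "M * exp (- \<nu> * t) \<le> M" using M_ge_1 \<nu>_pos t by (simp add: mult_le_cancel_left1)
  thus ?thesis using norm_T_le[OF t, of x] by (meson mult_right_mono norm_ge_zero order_trans)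
qed

lemma T_tendsto_self:
  assumes h: "(h \<longlongrightarrow> 0) F" and h_nonneg: "\<forall>\<^sub>F p in F. h p \<ge> 0"
  shows "((\<lambda>p. T (h p) x) \<longlongrightarrow> x) F"
proof (rule tendstoI)
  fix e :: real assume e: "e > 0"
  have "((\<lambda>t. T t x) \<longlongrightarrow> x) (at_right 0)" using C0 by (simp add: C0_semigroup_def)
  hence "\<forall>\<^sub>F t in at_right 0. dist (T t x) x < e" using e by (rule tendstoD)
  then obtain b where b: "b > 0" "\<And>t. 0 < t \<Longrightarrow> t < b \<Longrightarrow> dist (T t x) x < e"
    by (auto simp: eventually_at_right_field)
  show "\<forall>\<^sub>F p in F. dist (T (h p) x) x < e"
    using tendstoD[OF h b(1)] h_nonneg
  proof eventually_elim
    case (elim p)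
    thus ?case using b(2)[of "h p"] e by (cases "h p = 0") auto
  qed
qed

lemma norm_T_diff_le:
  assumes "a \<ge> 0" "b \<ge> 0"
  shows "norm (T a x - T b x) \<le> M * norm (T \<bar>a - b\<bar> x - x)"
proof -
  have *: "norm (T s x - T (s + d) x) \<le> M * norm (T d x - x)" if "s \<ge> 0" "d \<ge> 0" for s d
  proof -
    have "T s x - T (s + d) x = - T s (T d x - x)"
      using that by (simp add: T_add linear_diff[OF bounded_linear.linear[OF bounded_linear_T]])
    thus ?thesis using norm_T_le_M[OF that(1), of "T d x - x"] by simp
  qed
  show ?thesis
  proof (cases "a \<le> b")
    case True
    thus ?thesis using *[of a "b - a"] assms by simp
  next
    case False
    thus ?thesis using *[of b "a - b"] assms by (simp add: norm_minus_commute)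
  qed
qed

lemma tendsto_T:
  assumes t: "(t \<longlongrightarrow> t0) F" "\<forall>\<^sub>F p in F. t p \<ge> 0" "t0 \<ge> 0" and x: "(x \<longlongrightarrow> x0) F"
  shows "((\<lambda>p. T (t p) (x p)) \<longlongrightarrow> T t0 x0) F"
proof -
  have dist: "\<forall>\<^sub>F p in F. norm (T (t p) (x p) - T t0 x0)
      \<le> M * norm (x p - x0) + M * norm (T \<bar>t p - t0\<bar> x0 - x0)"
    using t(2)
  proof eventually_elim
    case (elim p)
    have "T (t p) (x p) - T t0 x0 = T (t p) (x p - x0) + (T (t p) x0 - T t0 x0)"
      using elim by (simp add: linear_diff[OF bounded_linear.linear[OF bounded_linear_T]])
    thus ?case
      using norm_T_le_M[OF elim, of "x p - x0"] norm_T_diff_le[OF elim t(3), of x0]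
      by (metis add_mono norm_triangle_le)
  qed
  have "((\<lambda>p. T \<bar>t p - t0\<bar> x0) \<longlongrightarrow> x0) F"
    using t(1) by (intro T_tendsto_self) (auto simp: tendsto_rabs_zero LIM_zero)
  hence "((\<lambda>p. M * norm (x p - x0) + M * norm (T \<bar>t p - t0\<bar> x0 - x0)) \<longlongrightarrow> 0) F"
    using x by (auto intro!: tendsto_add_zero tendsto_mult_right_zero tendsto_norm_zero LIM_zero)
  thus ?thesis by (rule Lim_null_comparison[OF dist, THEN LIM_zero_cancel])
qed

lemma measurable_T:
  assumes "f \<in> borel_measurable N" "v \<in> borel_measurable N" "\<And>\<omega>. \<omega> \<in> space N \<Longrightarrow> f \<omega> \<ge> 0"
  shows "(\<lambda>\<omega>. T (f \<omega>) (v \<omega>)) \<in> borel_measurable N"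
proof -
  define \<Phi> where "\<Phi> p = T (max 0 (fst p)) (snd p)" for p
  have "(\<Phi> \<longlongrightarrow> \<Phi> p) (at p within UNIV)" for p
    unfolding \<Phi>_def
    by (intro tendsto_T tendsto_max tendsto_const tendsto_fst tendsto_snd tendsto_ident_at) auto
  hence "continuous_on UNIV \<Phi>"
    unfolding continuous_on_def by blast
  hence "\<Phi> \<in> borel_measurable borel"
    by (rule borel_measurable_continuous_onI)
  hence "(\<lambda>\<omega>. \<Phi> (f \<omega>, v \<omega>)) \<in> borel_measurable N"
    unfolding borel_prod[symmetric] using assms(1,2) by measurable
  thus ?thesis
    by (rule measurable_cong[THEN iffD1, rotated]) (simp add: \<Phi>_def assms(3) max_absorb2)
qed

end

section \<open>Operator chains\<close>

lemma opchain_cong: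
  "(\<And>j. j \<le> k \<Longrightarrow> s j = s' j) \<Longrightarrow> (\<And>j. j \<in> {1..k} \<Longrightarrow> m j = m' j) \<Longrightarrow>
   opchain T N s m k = opchain T N s' m' k"
  by (induction k) auto

locale bilinear_system = exp_stable_semigroup T M \<nu>
  for T :: "real \<Rightarrow> 'x::{real_inner,polish_space} \<Rightarrow> 'x" and M \<nu> +
  fixes N :: "nat \<Rightarrow> 'x \<Rightarrow> 'x" and n :: nat and C :: "'x \<Rightarrow> 'h::real_inner"
  assumes bounded_linear_N: "i < n \<Longrightarrow> bounded_linear (N i)"
    and bounded_linear_C: "bounded_linear C"
begin

lemma bounded_linear_opchain:
  "m \<in> {1..k} \<rightarrow> {..<n} \<Longrightarrow> (\<And>j. j \<le> k \<Longrightarrow> 0 \<le> s j) \<Longrightarrow> bounded_linear (opchain T N s m k)"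
proof (induction k)
  case (Suc k)
  have bl: "bounded_linear (opchain T N s m k)" "bounded_linear (N (m (Suc k)))"
    "bounded_linear (T (s (Suc k)))"
    using Suc bounded_linear_N bounded_linear_T by (auto simp: Pi_iff)
  show ?case
    using bounded_linear_compose[OF bounded_linear_compose[OF bl(1,2)] bl(3)] by (simp add: comp_def)
qed (simp add: bounded_linear_T)

lemma opchain_T:
  assumes "s k \<ge> 0" "a \<ge> 0"
  shows "opchain T N s m k (T a y) = opchain T N (s(k := s k + a)) m k y"
proof (cases k)
  case (Suc k')
  have "opchain T N (s(k := s k + a)) m k' = opchain T N s m k'"
    by (rule opchain_cong) (auto simp: Suc)
  thus ?thesis using assms T_add Suc by simp
qed (use assms T_add in simp)

lemma opchain_T_N:
  assumes "s k \<ge> 0" "a \<ge> 0"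
  shows "opchain T N s m k (T a (N i y)) =
         opchain T N (s(k := s k + a, Suc k := 0)) (m(Suc k := i)) (Suc k) y"
proof -
  have "opchain T N (s(k := s k + a, Suc k := 0)) (m(Suc k := i)) k = opchain T N (s(k := s k + a)) m k"
    by (rule opchain_cong) auto
  thus ?thesis using opchain_T[of s k a] assms by simp
qed

lemma C_opchain_T_sum_N:
  assumes m: "m \<in> {1..k} \<rightarrow> {..<n}" and s: "\<forall>j\<le>k. 0 \<le> s j" and a: "0 \<le> a"
  shows "C (opchain T N s m k (T a (\<Sum>i<n. c i *\<^sub>R N i x))) =
    (\<Sum>i<n. c i *\<^sub>R C (opchain T N (s(k := s k + a, Suc k := 0)) (m(Suc k := i)) (Suc k) x))"
proof -
  have bl: "bounded_linear (\<lambda>x. C (opchain T N s m k (T a x)))"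
    using bounded_linear_compose[OF bounded_linear_C
        bounded_linear_compose[OF bounded_linear_opchain[OF m] bounded_linear_T[OF a]]] s
    by simp
  have "C (opchain T N s m k (T a (\<Sum>i<n. c i *\<^sub>R N i x))) =
      (\<Sum>i<n. c i *\<^sub>R C (opchain T N s m k (T a (N i x))))"
    using linear_sum[OF bounded_linear.linear[OF bl], of "\<lambda>i. c i *\<^sub>R N i x" "{..<n}"]
      linear_scale[OF bounded_linear.linear[OF bl]]
    by simp
  thus ?thesis using s a by (simp add: opchain_T_N)
qed

lemma norm_opchain_le:
  assumes "m \<in> {1..k} \<rightarrow> {..<n}" "\<And>j. j \<le> k \<Longrightarrow> 0 \<le> s j"
    and b: "\<And>i x. i < n \<Longrightarrow> norm (N i x) \<le> b i * norm x" "\<And>i. i < n \<Longrightarrow> 0 \<le> b i"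
  shows "norm (opchain T N s m k y) \<le>
    (\<Prod>j\<le>k. M * exp (- \<nu> * s j)) * (\<Prod>j\<in>{1..k}. b (m j)) * norm y"
  using assms(1,2)
proof (induction k arbitrary: y)
  case 0
  thus ?case using norm_T_le by simp
next
  case (Suc k)
  have m: "m \<in> {1..k} \<rightarrow> {..<n}" "m (Suc k) < n" and s: "\<And>j. j \<le> Suc k \<Longrightarrow> 0 \<le> s j"
    using Suc.prems by (auto simp: Pi_iff)
  define P where "P = (\<Prod>j\<le>k. M * exp (- \<nu> * s j)) * (\<Prod>j\<in>{1..k}. b (m j))"
  have P: "P \<ge> 0"
    unfolding P_def using M_ge_1 b(2) m(1) by (force intro!: mult_nonneg_nonneg prod_nonneg simp: Pi_iff)
  let ?z = "N (m (Suc k)) (T (s (Suc k)) y)"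
  have "norm (opchain T N s m (Suc k) y) = norm (opchain T N s m k ?z)" by simp
  also have "\<dots> \<le> P * norm ?z" unfolding P_def using Suc.IH[OF m(1)] s by simp
  also have "\<dots> \<le> P * (b (m (Suc k)) * (M * exp (- \<nu> * s (Suc k)) * norm y))"
    using b[OF m(2)] norm_T_le[OF s[OF order_refl]] P by (meson mult_left_mono order_trans)
  also have "\<dots> = (\<Prod>j\<le>Suc k. M * exp (- \<nu> * s j)) * (\<Prod>j\<in>{1..Suc k}. b (m j)) * norm y"
    unfolding P_def by (simp only: prod.atMost_Suc prod.nat_ivl_Suc' mult_ac)
  finally show ?case .
qed

lemma tendsto_opchain:
  assumes "m \<in> {1..k} \<rightarrow> {..<n}" "\<And>j. j \<le> k \<Longrightarrow> 0 \<le> s j"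
    and "\<And>j. j \<le> k \<Longrightarrow> ((\<lambda>p. s' p j) \<longlongrightarrow> s j) F" "\<forall>\<^sub>F p in F. \<forall>j\<le>k. 0 \<le> s' p j"
    and "(y' \<longlongrightarrow> y) F"
  shows "((\<lambda>p. opchain T N (s' p) m k (y' p)) \<longlongrightarrow> opchain T N s m k y) F"
  using assms
proof (induction k arbitrary: y' y)
  case 0
  thus ?case by (auto intro!: tendsto_T elim: eventually_mono)
next
  case (Suc k)
  have m: "m \<in> {1..k} \<rightarrow> {..<n}" "m (Suc k) < n"
    using Suc.prems(1) by (auto simp: Pi_iff)
  have "((\<lambda>p. T (s' p (Suc k)) (y' p)) \<longlongrightarrow> T (s (Suc k)) y) F"
    using Suc.prems(2-5) by (intro tendsto_T) (auto elim: eventually_mono)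
  hence "((\<lambda>p. N (m (Suc k)) (T (s' p (Suc k)) (y' p))) \<longlongrightarrow> N (m (Suc k)) (T (s (Suc k)) y)) F"
    by (rule bounded_linear.tendsto[OF bounded_linear_N[OF m(2)]])
  hence "((\<lambda>p. opchain T N (s' p) m k (N (m (Suc k)) (T (s' p (Suc k)) (y' p)))) \<longlongrightarrow>
     opchain T N s m k (N (m (Suc k)) (T (s (Suc k)) y))) F"
    using Suc.prems(2-4) by (intro Suc.IH[OF m(1)]) (auto elim: eventually_mono)
  thus ?case by simp
qed

lemma measurable_opchain:
  assumes "m \<in> {1..k} \<rightarrow> {..<n}"
    and "\<And>j. j \<le> k \<Longrightarrow> (\<lambda>\<omega>. s \<omega> j) \<in> borel_measurable \<Omega>"
    and "\<And>\<omega> j. \<omega> \<in> space \<Omega> \<Longrightarrow> j \<le> k \<Longrightarrow> 0 \<le> s \<omega> j"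
    and "v \<in> borel_measurable \<Omega>"
  shows "(\<lambda>\<omega>. opchain T N (s \<omega>) m k (v \<omega>)) \<in> borel_measurable \<Omega>"
  using assms
proof (induction k arbitrary: v)
  case 0
  thus ?case by (simp add: measurable_T)
next
  case (Suc k)
  have "(\<lambda>\<omega>. T (s \<omega> (Suc k)) (v \<omega>)) \<in> borel_measurable \<Omega>"
    using Suc.prems by (intro measurable_T) auto
  moreover have "N (m (Suc k)) \<in> borel_measurable borel"
    using Suc.prems(1) bounded_linear_N
    by (auto simp: Pi_iff intro!: borel_measurable_continuous_onI linear_continuous_on)
  ultimately have "(\<lambda>\<omega>. N (m (Suc k)) (T (s \<omega> (Suc k)) (v \<omega>))) \<in> borel_measurable \<Omega>"
    by (rule measurable_compose)
  hence "(\<lambda>\<omega>. opchain T N (s \<omega>) m k (N (m (Suc k)) (T (s \<omega> (Suc k)) (v \<omega>)))) \<in> borel_measurable \<Omega>"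
    using Suc.prems by (intro Suc.IH) (auto simp: Pi_iff)
  thus ?case by simp
qed

definition unobservable :: "'x \<Rightarrow> bool" where
  "unobservable x \<longleftrightarrow>
     (\<forall>k m s. m \<in> {1..k} \<rightarrow> {..<n} \<longrightarrow> (\<forall>j\<le>k. 0 \<le> s j) \<longrightarrow> C (opchain T N s m k x) = 0)"

lemma C_eq_0_if_unobservable:
  assumes "unobservable x"
  shows "C x = 0"
  using assms[unfolded unobservable_def, rule_format, where k=0 and m="\<lambda>_. 0" and s="\<lambda>_. 0"]
  by simp

definition N_bound :: real where
  "N_bound = 1 + (\<Sum>i<n. onorm (N i))"

definition chain_growth :: "nat \<Rightarrow> real" where
  "chain_growth k = M ^ Suc k * N_bound ^ k"

text \<open>Normalising by chain_growth makes one Duhamel step contract: a chain that is one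
  factor longer has an a priori bound larger by the factor M * N_bound.\<close>

definition chain_bounded :: "real \<Rightarrow> 'x \<Rightarrow> bool" where
  "chain_bounded \<epsilon> x \<longleftrightarrow> (\<forall>k m (s :: nat \<Rightarrow> real). m \<in> {1..k} \<rightarrow> {..<n} \<longrightarrow> (\<forall>j\<le>k. 0 \<le> s j) \<longrightarrow>
     norm (C (opchain T N s m k x)) \<le> chain_growth k * \<epsilon>)"

lemma N_bound_pos: "0 < N_bound"
proof -
  have "0 \<le> (\<Sum>i<n. onorm (N i))" by (intro sum_nonneg) (simp add: onorm_pos_le bounded_linear_N)
  thus ?thesis unfolding N_bound_def by linarith
qed

lemma chain_growth_pos: "0 < chain_growth k"
  using M_ge_1 N_bound_pos by (simp add: chain_growth_def)

lemma chain_growth_Suc: "chain_growth (Suc k) = chain_growth k * (M * N_bound)"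
  by (simp add: chain_growth_def mult_ac)

lemma norm_C_opchain_le:
  assumes m: "m \<in> {1..k} \<rightarrow> {..<n}" and s: "\<And>j. j \<le> k \<Longrightarrow> 0 \<le> s j"
  shows "norm (C (opchain T N s m k x)) \<le> onorm C * chain_growth k * norm x"
proof -
  have N: "norm (N i y) \<le> N_bound * norm y" if "i < n" for i y
  proof -
    have "onorm (N i) \<le> (\<Sum>i<n. onorm (N i))"
      using that by (intro member_le_sum) (auto intro: onorm_pos_le bounded_linear_N)
    hence "onorm (N i) \<le> N_bound" by (simp add: N_bound_def)
    thus ?thesis by (meson onorm[OF bounded_linear_N[OF that]] mult_right_mono norm_ge_zero order_trans)
  qed
  have "(\<Prod>j\<le>k. M * exp (- \<nu> * s j)) \<le> (\<Prod>j\<le>k. M)"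
    using M_ge_1 \<nu>_pos s by (intro prod_mono) (simp add: mult_le_cancel_left1)
  hence "(\<Prod>j\<le>k. M * exp (- \<nu> * s j)) * (\<Prod>j\<in>{1..k}. N_bound) * norm x
      \<le> chain_growth k * norm x"
    using N_bound_pos by (simp add: chain_growth_def mult_right_mono)
  hence "norm (opchain T N s m k x) \<le> chain_growth k * norm x"
    using norm_opchain_le[OF m s N] N_bound_pos by (meson less_imp_le order_trans)
  hence "onorm C * norm (opchain T N s m k x) \<le> onorm C * (chain_growth k * norm x)"
    by (rule mult_left_mono[OF _ onorm_pos_le[OF bounded_linear_C]])
  thus ?thesis
    using onorm[OF bounded_linear_C, of "opchain T N s m k x"] by (simp add: mult_ac)
qed

lemma unobservable_if_chain_bounded_halving:
  assumes "\<And>p. chain_bounded (D / 2 ^ p) x"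
  shows "unobservable x"
  unfolding unobservable_def
proof (intro allI impI)
  fix k m and s :: "nat \<Rightarrow> real"
  assume "m \<in> {1..k} \<rightarrow> {..<n}" "\<forall>j\<le>k. 0 \<le> s j"
  hence le: "norm (C (opchain T N s m k x)) \<le> chain_growth k * D / 2 ^ p" for p
    using assms unfolding chain_bounded_def by simp
  have "(\<lambda>p. chain_growth k * D / 2 ^ p) \<longlonglongrightarrow> 0" by (rule LIMSEQ_divide_realpow_zero) simp
  hence "norm (C (opchain T N s m k x)) \<le> 0"
    by (rule tendsto_lowerbound) (simp_all add: le)
  thus "C (opchain T N s m k x) = 0" by simp
qed

end

section \<open>The kernel of the observability gramian\<close>

abbreviation pos_halfline :: "real measure" where
  "pos_halfline \<equiv> restrict_space lborel {0<..}"

lemma pos_halfline_PiM_space: "s \<in> space (\<Pi>\<^sub>M j\<in>I. pos_halfline) \<Longrightarrow> j \<in> I \<Longrightarrow> 0 < s j"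
  by (auto simp: space_PiM space_restrict_space PiE_iff)

lemma measurable_component_pos_halfline:
  "j \<in> I \<Longrightarrow> (\<lambda>s. s j) \<in> borel_measurable (\<Pi>\<^sub>M j\<in>I. pos_halfline)"
  by (auto intro!: measurable_compose[OF measurable_component_singleton] measurable_restrict_space1)

lemma exp_pos_halfline_integral:
  assumes "u > 0"
  shows "integrable pos_halfline (\<lambda>x. c * exp (-(x * u)))"
    and "integral\<^sup>L pos_halfline (\<lambda>x. c * exp (-(x * u))) = c / u"
proof -
  have "set_integrable lborel {0<..} (\<lambda>x. exp (-(x * u)))"
    by (rule integrable_I0i_exp_mscale[OF assms])
  hence "integrable pos_halfline (\<lambda>x. exp (-(x * u)))"
    by (subst integrable_restrict_space) (auto simp: set_integrable_def)
  thus "integrable pos_halfline (\<lambda>x. c * exp (-(x * u)))" by (rule integrable_mult_right)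
  have "integral\<^sup>L pos_halfline (\<lambda>x. exp (-(x * u))) = (LINT x:{0<..}|lborel. exp (-(x * u)))"
    by (subst integral_restrict_space) (auto simp: set_lebesgue_integral_def)
  also have "\<dots> = 1 / u"
    using LBINT_I0i_exp_mscale[OF assms] by (simp add: interval_lebesgue_integral_0_infty)
  finally show "integral\<^sup>L pos_halfline (\<lambda>x. c * exp (-(x * u))) = c / u" by simp
qed

lemma product_sigma_finite_pos_halfline: "product_sigma_finite (\<lambda>_. pos_halfline)"
  unfolding product_sigma_finite_def
  by (simp add: sigma_finite_measure_restrict_space[OF sigma_finite_lborel])

lemma prod_exp_pos_halfline_integral:
  assumes "finite I" "u > 0"
  shows "integrable (\<Pi>\<^sub>M j\<in>I. pos_halfline) (\<lambda>s. \<Prod>j\<in>I. c * exp (-(s j * u)))"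
    and "integral\<^sup>L (\<Pi>\<^sub>M j\<in>I. pos_halfline) (\<lambda>s. \<Prod>j\<in>I. c * exp (-(s j * u))) = (c / u) ^ card I"
proof -
  interpret product_sigma_finite "\<lambda>_. pos_halfline" by (rule product_sigma_finite_pos_halfline)
  show "integrable (\<Pi>\<^sub>M j\<in>I. pos_halfline) (\<lambda>s. \<Prod>j\<in>I. c * exp (-(s j * u)))"
    using product_integrable_prod[OF assms(1), of "\<lambda>_ x. c * exp (-(x * u))"]
      exp_pos_halfline_integral[OF assms(2)] by simp
  show "integral\<^sup>L (\<Pi>\<^sub>M j\<in>I. pos_halfline) (\<lambda>s. \<Prod>j\<in>I. c * exp (-(s j * u))) = (c / u) ^ card I"
    using product_integral_prod[OF assms(1), of "\<lambda>_ x. c * exp (-(x * u))"]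
      exp_pos_halfline_integral[OF assms(2)] by simp
qed

lemma emeasure_box_pos_halfline:
  assumes "\<And>j. j \<in> I \<Longrightarrow> 0 \<le> a j \<and> a j < b j" "finite I"
  shows "emeasure (\<Pi>\<^sub>M j\<in>I. pos_halfline) (\<Pi>\<^sub>E j\<in>I. {a j<..<b j}) = ennreal (\<Prod>j\<in>I. b j - a j)"
proof -
  interpret product_sigma_finite "\<lambda>_. pos_halfline" by (rule product_sigma_finite_pos_halfline)
  have sub: "{a j<..<b j} \<subseteq> {0<..}" if "j \<in> I" for j
    using assms(1)[OF that] by auto
  have "emeasure (\<Pi>\<^sub>M j\<in>I. pos_halfline) (\<Pi>\<^sub>E j\<in>I. {a j<..<b j})
      = (\<Prod>j\<in>I. emeasure pos_halfline {a j<..<b j})"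
    using assms(2) sub by (intro emeasure_PiM) (auto simp: sets_restrict_space_iff)
  also have "\<dots> = (\<Prod>j\<in>I. ennreal (b j - a j))"
  proof (rule prod.cong)
    fix j assume "j \<in> I"
    thus "emeasure pos_halfline {a j<..<b j} = ennreal (b j - a j)"
      using sub assms(1) by (simp add: emeasure_restrict_space less_imp_le)
  qed simp
  also have "\<dots> = ennreal (\<Prod>j\<in>I. b j - a j)"
    using assms by (intro prod_ennreal) (auto intro: less_imp_le)
  finally show ?thesis .
qed

lemma AE_exists_in_non_null:
  assumes "AE x in M. P x" "B \<in> sets M" "emeasure M B \<noteq> 0"
  shows "\<exists>x\<in>B. P x"
proof (rule ccontr)
  assume "\<not> (\<exists>x\<in>B. P x)"
  hence "AE x in M. x \<notin> B" using assms(1) by (auto elim: eventually_mono)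
  thus False using assms(2,3) AE_iff_null_sets by blast
qed

lemma AE_pos_halfline_PiM_approx:
  fixes k :: nat
  assumes AE: "AE s' in (\<Pi>\<^sub>M j\<in>{..k}. pos_halfline). P s'" and s: "\<And>j. j \<le> k \<Longrightarrow> 0 \<le> s j"
  obtains \<sigma> where "\<And>p. P (\<sigma> p)" "\<And>j. j \<le> k \<Longrightarrow> (\<lambda>p. \<sigma> p j) \<longlonglongrightarrow> s j"
    "\<And>p j. j \<le> k \<Longrightarrow> s j \<le> \<sigma> p j"
proof -
  define box where "box p = (\<Pi>\<^sub>E j\<in>{..k}. {s j<..<s j + inverse (Suc p)})" for p
  have "\<exists>s'\<in>box p. P s'" for p
  proof (rule AE_exists_in_non_null[OF AE])
    show "box p \<in> sets (\<Pi>\<^sub>M j\<in>{..k}. pos_halfline)"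
      unfolding box_def using s
      by (intro sets_PiM_I_finite) (auto simp: sets_restrict_space_iff intro: le_less_trans[OF s])
    show "emeasure (\<Pi>\<^sub>M j\<in>{..k}. pos_halfline) (box p) \<noteq> 0"
      unfolding box_def using s by (subst emeasure_box_pos_halfline) auto
  qed
  then obtain \<sigma> where \<sigma>: "\<And>p. \<sigma> p \<in> box p" "\<And>p. P (\<sigma> p)" by metis
  have lower: "s j \<le> \<sigma> p j" and upper: "\<sigma> p j \<le> s j + inverse (Suc p)" if "j \<le> k" for p j
    using \<sigma>(1)[of p] that by (auto simp: box_def PiE_iff less_imp_le)
  have "(\<lambda>p. \<sigma> p j) \<longlonglongrightarrow> s j" if "j \<le> k" for j
  proof (rule tendsto_sandwich[where f="\<lambda>_. s j" and h="\<lambda>p. s j + inverse (real (Suc p))"])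
    show "\<forall>\<^sub>F p in sequentially. s j \<le> \<sigma> p j" using lower[OF that] by simp
    show "\<forall>\<^sub>F p in sequentially. \<sigma> p j \<le> s j + inverse (real (Suc p))" using upper[OF that] by simp
    show "(\<lambda>p. s j + inverse (real (Suc p))) \<longlonglongrightarrow> s j"
      using tendsto_add[OF tendsto_const LIMSEQ_inverse_real_of_nat] by simp
  qed simp
  with that \<sigma>(2) lower show ?thesis by blast
qed

context bilinear_system
begin

definition Gamma_sq :: real where
  "Gamma_sq = (\<Sum>i<n. onorm (N i \<circ> adjoint (N i)))"

lemma onorm_N_adjoint_nonneg: "i < n \<Longrightarrow> 0 \<le> onorm (N i \<circ> adjoint (N i))"
  using bounded_linear_compose[OF bounded_linear_N bounded_linear_adjoint[OF bounded_linear_N]]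
  by (simp add: onorm_pos_le comp_def)

lemma Gamma_sq_nonneg: "0 \<le> Gamma_sq"
  unfolding Gamma_sq_def by (intro sum_nonneg) (simp add: onorm_N_adjoint_nonneg)

lemma Ok_inner_diag:
  "Ok_inner C T N n k s y y = (\<Sum>m\<in>PiE {1..k} (\<lambda>_. {..<n}). norm (C (opchain T N s m k y))^2)"
  by (simp add: Ok_inner_def power2_norm_eq_inner)

lemma Ok_inner_nonneg: "0 \<le> Ok_inner C T N n k s y y"
  unfolding Ok_inner_diag by (simp add: sum_nonneg)

lemma norm_C_opchain_sq_le:
  assumes m: "m \<in> {1..k} \<rightarrow> {..<n}" and s: "\<And>j. j \<le> k \<Longrightarrow> 0 \<le> s j"
  shows "norm (C (opchain T N s m k y))^2 \<le> onorm C^2 * norm y^2 *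
     (\<Prod>j\<le>k. M^2 * exp (-(s j * (2 * \<nu>)))) * (\<Prod>j\<in>{1..k}. onorm (N (m j) \<circ> adjoint (N (m j))))"
proof -
  define P where "P = (\<Prod>j\<le>k. M * exp (- \<nu> * s j))"
  define Q where "Q = (\<Prod>j\<in>{1..k}. sqrt (onorm (N (m j) \<circ> adjoint (N (m j)))))"
  have "norm (opchain T N s m k y) \<le> P * Q * norm y"
    unfolding P_def Q_def
    by (rule norm_opchain_le[OF m s])
       (use norm_le_sqrt_onorm_adjoint[OF bounded_linear_N] onorm_N_adjoint_nonneg in
        \<open>auto simp: comp_def\<close>)
  hence "norm (C (opchain T N s m k y)) \<le> onorm C * (P * Q * norm y)"
    using onorm[OF bounded_linear_C, of "opchain T N s m k y"] onorm_pos_le[OF bounded_linear_C]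
    by (meson mult_left_mono order_trans)
  hence "norm (C (opchain T N s m k y))^2 \<le> (onorm C * (P * Q * norm y))^2"
    by (simp add: power_mono)
  also have "\<dots> = onorm C^2 * norm y^2 * P^2 * Q^2" by (simp add: power_mult_distrib)
  also have "P^2 = (\<Prod>j\<le>k. M^2 * exp (-(s j * (2 * \<nu>))))"
    unfolding P_def prod_power_distrib
    by (simp add: exp_double[symmetric] algebra_simps)
  also have "Q^2 = (\<Prod>j\<in>{1..k}. onorm (N (m j) \<circ> adjoint (N (m j))))"
    unfolding Q_def prod_power_distrib
    using m by (intro prod.cong) (auto simp: onorm_N_adjoint_nonneg Pi_iff)
  finally show ?thesis .
qed

lemma Ok_inner_le:
  assumes "\<And>j. j \<le> k \<Longrightarrow> 0 \<le> s j"
  shows "Ok_inner C T N n k s y y \<le>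
    onorm C^2 * norm y^2 * Gamma_sq^k * (\<Prod>j\<le>k. M^2 * exp (-(s j * (2 * \<nu>))))"
proof -
  define A where "A = onorm C^2 * norm y^2 * (\<Prod>j\<le>k. M^2 * exp (-(s j * (2 * \<nu>))))"
  have "Ok_inner C T N n k s y y \<le>
      (\<Sum>m\<in>PiE {1..k} (\<lambda>_. {..<n}). A * (\<Prod>j\<in>{1..k}. onorm (N (m j) \<circ> adjoint (N (m j)))))"
    unfolding Ok_inner_diag A_def
    using norm_C_opchain_sq_le[OF _ assms] by (intro sum_mono) (auto simp: PiE_iff)
  also have "\<dots> = A * Gamma_sq^k"
    using prod_sum_PiE[of "{1..k}" "\<lambda>_. {..<n}" "\<lambda>_ i. onorm (N i \<circ> adjoint (N i))"]
    by (simp add: sum_distrib_left[symmetric] Gamma_sq_def)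
  finally show ?thesis by (simp add: A_def mult_ac)
qed

lemma measurable_Ok_inner:
  "(\<lambda>s. Ok_inner C T N n k s y y) \<in> borel_measurable (\<Pi>\<^sub>M j\<in>{..k}. pos_halfline)"
proof -
  have "(\<lambda>s. C (opchain T N s m k y)) \<in> borel_measurable (\<Pi>\<^sub>M j\<in>{..k}. pos_halfline)"
    if "m \<in> PiE {1..k} (\<lambda>_. {..<n})" for m
  proof -
    have "(\<lambda>s. opchain T N s m k y) \<in> borel_measurable (\<Pi>\<^sub>M j\<in>{..k}. pos_halfline)"
      using that by (intro measurable_opchain)
        (auto simp: PiE_iff intro: measurable_component_pos_halfline less_imp_le[OF pos_halfline_PiM_space])
    moreover have "C \<in> borel_measurable borel"
      by (intro borel_measurable_continuous_onI linear_continuous_on bounded_linear_C)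
    ultimately show ?thesis by (rule measurable_compose)
  qed
  thus ?thesis unfolding Ok_inner_diag by measurable
qed

lemma Ok_inner_integral_bound:
  shows "integrable (\<Pi>\<^sub>M j\<in>{..k}. pos_halfline) (\<lambda>s. Ok_inner C T N n k s y y)"
    and "(\<integral>s. Ok_inner C T N n k s y y \<partial>(\<Pi>\<^sub>M j\<in>{..k}. pos_halfline)) \<le>
       onorm C^2 * norm y^2 * Gamma_sq^k * (M^2 / (2 * \<nu>))^Suc k"
proof -
  define K where "K = onorm C^2 * norm y^2 * Gamma_sq^k"
  define G where "G s = K * (\<Prod>j\<le>k. M^2 * exp (-(s j * (2 * \<nu>))))" for s :: "nat \<Rightarrow> real"
  have \<nu>2: "2 * \<nu> > 0" using \<nu>_pos by simp
  have G: "integrable (\<Pi>\<^sub>M j\<in>{..k}. pos_halfline) G"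
    "integral\<^sup>L (\<Pi>\<^sub>M j\<in>{..k}. pos_halfline) G = K * (M^2 / (2 * \<nu>))^Suc k"
    unfolding G_def using prod_exp_pos_halfline_integral[OF _ \<nu>2, of "{..k}" "M^2"] by auto
  have le_G: "Ok_inner C T N n k s y y \<le> G s" if "s \<in> space (\<Pi>\<^sub>M j\<in>{..k}. pos_halfline)" for s
    using Ok_inner_le[of k s y] pos_halfline_PiM_space[OF that]
    by (simp add: G_def K_def less_imp_le mult_ac)
  show int: "integrable (\<Pi>\<^sub>M j\<in>{..k}. pos_halfline) (\<lambda>s. Ok_inner C T N n k s y y)"
    using le_G Ok_inner_nonneg
    by (intro Bochner_Integration.integrable_bound[OF G(1) measurable_Ok_inner] AE_I2)
       (fastforce intro: order_trans)
  show "(\<integral>s. Ok_inner C T N n k s y y \<partial>(\<Pi>\<^sub>M j\<in>{..k}. pos_halfline)) \<le>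
       onorm C^2 * norm y^2 * Gamma_sq^k * (M^2 / (2 * \<nu>))^Suc k"
    using integral_mono[OF int G(1) le_G] G(2) by (simp add: K_def)
qed

lemma integral_Ok_inner_eq_0:
  assumes small: "M^2 * Gamma_sq / (2 * \<nu>) < 1" and y: "y \<in> obs_kernel C T N n"
  shows "(\<integral>s. Ok_inner C T N n k s y y \<partial>(\<Pi>\<^sub>M j\<in>{..k}. pos_halfline)) = 0"
proof -
  define a where "a = (\<lambda>k. \<integral>s. Ok_inner C T N n k s y y \<partial>(\<Pi>\<^sub>M j\<in>{..k}. pos_halfline))"
  define q where "q = Gamma_sq * (M^2 / (2 * \<nu>))"
  have q: "0 \<le> q" "q < 1"
    using small Gamma_sq_nonneg \<nu>_pos by (simp_all add: q_def mult_ac)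
  have a_nonneg: "0 \<le> a k" for k
    unfolding a_def by (intro Bochner_Integration.integral_nonneg Ok_inner_nonneg)
  have a_le: "a k \<le> (onorm C^2 * norm y^2 * (M^2 / (2 * \<nu>))) * q^k" for k
    using Ok_inner_integral_bound(2)[of k y]
    by (simp only: a_def q_def power_mult_distrib power_Suc mult_ac)
  \<comment> \<open>summability matters: the sum of a divergent series is 0 by convention\<close>
  have "summable (\<lambda>k. (onorm C^2 * norm y^2 * (M^2 / (2 * \<nu>))) * q^k)"
    using q by (intro summable_mult summable_geometric) simp
  hence "summable a"
    by (rule summable_comparison_test'[where N=0]) (use a_le a_nonneg in auto)
  moreover have "obs_gram C T N n y y = 0"
    using y by (simp add: obs_kernel_def)
  hence "suminf a = 0"
    by (simp add: obs_gram_def a_def)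
  ultimately have "a k = 0"
    using suminf_eq_zero_iff a_nonneg by blast
  thus ?thesis by (simp add: a_def)
qed

lemma C_opchain_eq_0_if_integral_Ok_inner_eq_0:
  assumes int0: "(\<integral>s. Ok_inner C T N n k s y y \<partial>(\<Pi>\<^sub>M j\<in>{..k}. pos_halfline)) = 0"
    and m: "m \<in> {1..k} \<rightarrow> {..<n}" and s: "\<And>j. j \<le> k \<Longrightarrow> 0 \<le> s j"
  shows "C (opchain T N s m k y) = 0"
proof -
  have AE: "AE s' in (\<Pi>\<^sub>M j\<in>{..k}. pos_halfline). Ok_inner C T N n k s' y y = 0"
    using integral_nonneg_eq_0_iff_AE[OF Ok_inner_integral_bound(1) AE_I2[OF Ok_inner_nonneg]] int0
    by simp
  obtain \<sigma> where \<sigma>: "\<And>p. Ok_inner C T N n k (\<sigma> p) y y = 0"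
    and conv: "\<And>j. j \<le> k \<Longrightarrow> (\<lambda>p. \<sigma> p j) \<longlonglongrightarrow> s j" and lower: "\<And>p j. j \<le> k \<Longrightarrow> s j \<le> \<sigma> p j"
    using AE_pos_halfline_PiM_approx[where s=s, OF AE s] by blast
  have zero: "C (opchain T N (\<sigma> p) m k y) = 0" for p
  proof -
    have "restrict m {1..k} \<in> PiE {1..k} (\<lambda>_. {..<n})" using m by auto
    hence "norm (C (opchain T N (\<sigma> p) (restrict m {1..k}) k y))^2 = 0"
      using \<sigma>[of p] unfolding Ok_inner_diag by (subst (asm) sum_nonneg_eq_0_iff) (auto intro: finite_PiE)
    moreover have "opchain T N (\<sigma> p) (restrict m {1..k}) k = opchain T N (\<sigma> p) m k"
      by (rule opchain_cong) auto
    ultimately show ?thesis by simp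
  qed
  have "0 \<le> \<sigma> p j" if "j \<le> k" for p j
    using lower[OF that, of p] s[OF that] by linarith
  hence "(\<lambda>p. opchain T N (\<sigma> p) m k y) \<longlonglongrightarrow> opchain T N s m k y"
    by (intro tendsto_opchain[OF m s conv]) simp_all
  hence "(\<lambda>p. C (opchain T N (\<sigma> p) m k y)) \<longlonglongrightarrow> C (opchain T N s m k y)"
    by (rule bounded_linear.tendsto[OF bounded_linear_C])
  thus ?thesis using zero by (simp add: LIMSEQ_const_iff)
qed

lemma unobservable_if_obs_kernel:
  "M^2 * Gamma_sq / (2 * \<nu>) < 1 \<Longrightarrow> y \<in> obs_kernel C T N n \<Longrightarrow> unobservable y"
  unfolding unobservable_def
  using C_opchain_eq_0_if_integral_Ok_inner_eq_0[OF integral_Ok_inner_eq_0] by blast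

end

section \<open>Mild solutions\<close>

lemma norm_bounded_linear_integral_le:
  fixes f :: "'a \<Rightarrow> 'b::{real_normed_vector,second_countable_topology}"
    and F :: "'b \<Rightarrow> 'c::real_inner"
  assumes F: "bounded_linear F" and g: "integrable M g"
    and le: "\<And>x. x \<in> space M \<Longrightarrow> norm (F (f x)) \<le> g x"
  shows "norm (F (integral\<^sup>L M f)) \<le> integral\<^sup>L M g"
proof -
  have g_nonneg: "0 \<le> integral\<^sup>L M g"
    using le by (intro Bochner_Integration.integral_nonneg) (meson norm_ge_zero order_trans)
  show ?thesis
  proof (cases "integrable M f")
    case True
    \<comment> \<open>'c is not a Banach space, so F \<circ> f cannot be integrated; test against w instead\<close>
    define w where "w = F (integral\<^sup>L M f)"
    have wF: "bounded_linear (\<lambda>v. inner w (F v))"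
      by (rule bounded_linear_compose[OF bounded_linear_inner_right F])
    have "norm w^2 = inner w (F (integral\<^sup>L M f))"
      by (simp add: w_def power2_norm_eq_inner)
    also have "\<dots> = (\<integral>x. inner w (F (f x)) \<partial>M)"
      by (rule integral_bounded_linear[OF wF True, symmetric])
    also have "\<dots> \<le> (\<integral>x. norm w * g x \<partial>M)"
    proof (rule integral_mono)
      show "integrable M (\<lambda>x. inner w (F (f x)))" by (rule integrable_bounded_linear[OF wF True])
      show "integrable M (\<lambda>x. norm w * g x)" using g by simp
      fix x assume x: "x \<in> space M"
      show "inner w (F (f x)) \<le> norm w * g x"
        using norm_cauchy_schwarz[of w "F (f x)"] mult_left_mono[OF le[OF x] norm_ge_zero[of w]]
        by linarith
    qed
    also have "\<dots> = integral\<^sup>L M g * norm w" by simp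
    finally have "norm w^2 \<le> integral\<^sup>L M g * norm w" .
    thus ?thesis unfolding w_def using le_of_square_le_mult g_nonneg norm_ge_zero by blast
  next
    case False
    thus ?thesis using g_nonneg by (simp add: not_integrable_integral_eq linear_simps(3)[OF F])
  qed
qed

locale mild_solution = bilinear_system T M \<nu> N n C
  for T :: "real \<Rightarrow> 'x::{real_inner,polish_space} \<Rightarrow> 'x" and M \<nu> N n and C :: "'x \<Rightarrow> 'h::real_inner" +
  fixes u :: "nat \<Rightarrow> real \<Rightarrow> real" and T0 :: real and \<phi> :: "real \<Rightarrow> 'x" and \<phi>0 :: 'x
  assumes u_square_integrable: "i < n \<Longrightarrow> integrable (lebesgue_on {0..T0}) (\<lambda>t. (u i t)^2)"
    and \<phi>_continuous: "continuous_on {0..T0} \<phi>"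
    and mild: "t \<in> {0..T0} \<Longrightarrow>
      \<phi> t = T t \<phi>0 + (\<integral>r. T (t - r) (\<Sum>i<n. u i r *\<^sub>R N i (\<phi> r)) \<partial>lebesgue_on {0..t})"
    and \<phi>0_unobservable: "unobservable \<phi>0"
begin

definition control_energy :: real where
  "control_energy = (\<Sum>i<n. \<integral>t. (u i t)^2 \<partial>lebesgue_on {0..T0})"

lemma control_energy_nonneg: "0 \<le> control_energy"
  unfolding control_energy_def by (intro sum_nonneg Bochner_Integration.integral_nonneg) simp

lemma chain_bounded_a_priori:
  obtains D where "0 \<le> D" "\<And>t. t \<in> {0..T0} \<Longrightarrow> chain_bounded D (\<phi> t)"
proof -
  have "bounded (\<phi> ` {0..T0})"
    by (intro compact_imp_bounded compact_continuous_image \<phi>_continuous compact_Icc)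
  then obtain B where B: "\<And>t. t \<in> {0..T0} \<Longrightarrow> norm (\<phi> t) \<le> B" "0 < B"
    unfolding bounded_pos by (meson imageI)
  have "chain_bounded (onorm C * B) (\<phi> t)" if "t \<in> {0..T0}" for t
    unfolding chain_bounded_def
  proof (intro allI impI)
    fix k m and s :: "nat \<Rightarrow> real" assume "m \<in> {1..k} \<rightarrow> {..<n}" "\<forall>j\<le>k. 0 \<le> s j"
    hence "norm (C (opchain T N s m k (\<phi> t))) \<le> onorm C * chain_growth k * norm (\<phi> t)"
      by (intro norm_C_opchain_le) auto
    also have "\<dots> \<le> onorm C * chain_growth k * B"
      using B(1)[OF that] chain_growth_pos onorm_pos_le[OF bounded_linear_C]
      by (intro mult_left_mono mult_nonneg_nonneg) (auto simp: less_imp_le)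
    finally show "norm (C (opchain T N s m k (\<phi> t))) \<le> chain_growth k * (onorm C * B)"
      by (simp add: mult_ac)
  qed
  moreover have "0 \<le> onorm C * B" using B(2) onorm_pos_le[OF bounded_linear_C] by simp
  ultimately show ?thesis using that by blast
qed

lemma C_opchain_mild:
  assumes t: "t \<in> {0..T0}" and m: "m \<in> {1..k} \<rightarrow> {..<n}" and s: "\<forall>j\<le>k. 0 \<le> s j"
  shows "C (opchain T N s m k (\<phi> t)) =
    C (opchain T N s m k (\<integral>r. T (t - r) (\<Sum>i<n. u i r *\<^sub>R N i (\<phi> r)) \<partial>lebesgue_on {0..t}))"
proof -
  have bl: "bounded_linear (\<lambda>x. C (opchain T N s m k x))"
    using bounded_linear_compose[OF bounded_linear_C bounded_linear_opchain[OF m]] s by simp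
  have "C (opchain T N s m k (T t \<phi>0)) = C (opchain T N (s(k := s k + t)) m k \<phi>0)"
    using opchain_T s t by simp
  also have "\<dots> = 0"
    using \<phi>0_unobservable m s t unfolding unobservable_def by auto
  finally show ?thesis
    using mild[OF t] linear_add[OF bounded_linear.linear[OF bl]] by simp
qed

lemma window_weight_integral:
  assumes \<tau>: "0 \<le> \<tau>" and \<delta>: "0 \<le> \<delta>" and t: "t \<in> {0..T0}" "t \<le> \<tau> + \<delta>"
    and L: "0 < L"
  shows "integrable (lebesgue_on {0..t}) (\<lambda>r. \<Sum>i<n. L * indicator {\<tau>..t} r + (u i r)^2 / L)"
    and "(\<integral>r. (\<Sum>i<n. L * indicator {\<tau>..t} r + (u i r)^2 / L) \<partial>lebesgue_on {0..t})
           \<le> real n * L * \<delta> + control_energy / L"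
proof -
  have sub: "{\<tau>..t} \<subseteq> {0..t}" using \<tau> by auto
  have "emeasure (lebesgue_on {0..t}) {\<tau>..t} = emeasure lebesgue {\<tau>..t}"
    using sub by (subst emeasure_restrict_space) auto
  hence ind: "integrable (lebesgue_on {0..t}) (indicator {\<tau>..t} :: real \<Rightarrow> real)"
    using sub by (intro integrable_real_indicator) (auto simp: sets_restrict_space_iff emeasure_lborel_Icc_eq)
  have "(\<integral>r. indicator {\<tau>..t} r \<partial>lebesgue_on {0..t}) = measure lebesgue {\<tau>..t}"
    using sub t \<tau> by (simp add: Int_absorb2 measure_restrict_space)
  hence ind_le: "(\<integral>r. indicator {\<tau>..t} r \<partial>lebesgue_on {0..t}) \<le> \<delta>"
    using t \<delta> by simp
  have usq: "integrable (lebesgue_on {0..t}) (\<lambda>r. (u i r)^2)" if "i < n" for i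
    by (rule integrable_subinterval[OF u_square_integrable[OF that]]) (use t in auto)
  have usq_le: "(\<integral>r. (u i r)^2 \<partial>lebesgue_on {0..t}) \<le> (\<integral>r. (u i r)^2 \<partial>lebesgue_on {0..T0})"
    if "i < n" for i
    by (rule integral_mono_lebesgue_on_AE[OF u_square_integrable[OF that]]) (use t in auto)
  show "integrable (lebesgue_on {0..t}) (\<lambda>r. \<Sum>i<n. L * indicator {\<tau>..t} r + (u i r)^2 / L)"
    using ind usq by (intro Bochner_Integration.integrable_sum) auto
  have "(\<integral>r. (\<Sum>i<n. L * indicator {\<tau>..t} r + (u i r)^2 / L) \<partial>lebesgue_on {0..t})
      = (\<Sum>i<n. L * (\<integral>r. indicator {\<tau>..t} r \<partial>lebesgue_on {0..t})
              + (\<integral>r. (u i r)^2 \<partial>lebesgue_on {0..t}) / L)"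
    using ind usq by (simp add: Bochner_Integration.integral_sum)
  also have "\<dots> \<le> (\<Sum>i<n. L * \<delta> + (\<integral>r. (u i r)^2 \<partial>lebesgue_on {0..T0}) / L)"
    using ind_le usq_le L by (intro sum_mono add_mono mult_left_mono divide_right_mono) auto
  also have "\<dots> = real n * L * \<delta> + control_energy / L"
    by (simp add: control_energy_def sum.distrib sum_divide_distrib)
  finally show "(\<integral>r. (\<Sum>i<n. L * indicator {\<tau>..t} r + (u i r)^2 / L) \<partial>lebesgue_on {0..t})
           \<le> real n * L * \<delta> + control_energy / L" .
qed

lemma norm_C_opchain_window_le:
  assumes \<epsilon>: "0 \<le> \<epsilon>"
    and past: "\<And>r. r \<in> {0..T0} \<Longrightarrow> r < \<tau> \<Longrightarrow> unobservable (\<phi> r)"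
    and window: "\<And>r. r \<in> {0..T0} \<Longrightarrow> r \<le> \<tau> + \<delta> \<Longrightarrow> chain_bounded \<epsilon> (\<phi> r)"
    and t: "t \<le> \<tau> + \<delta>" and r: "r \<in> {0..T0}" "r \<le> t"
    and m: "m \<in> {1..k} \<rightarrow> {..<n}" and s: "\<forall>j\<le>k. 0 \<le> s j"
  shows "norm (C (opchain T N s m k (\<phi> r))) \<le> chain_growth k * \<epsilon> * indicator {\<tau>..t} r"
proof (cases "r < \<tau>")
  case True
  hence "C (opchain T N s m k (\<phi> r)) = 0" using past[OF r(1)] m s unfolding unobservable_def by blast
  thus ?thesis using chain_growth_pos[of k] \<epsilon> by simp
next
  case False
  hence "indicator {\<tau>..t} r = (1::real)" using r by simp
  moreover have "r \<le> \<tau> + \<delta>" using r t by simp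
  ultimately show ?thesis using window[OF r(1)] m s unfolding chain_bounded_def by simp
qed

lemma norm_Duhamel_integrand_le:
  assumes L: "0 < L" and \<epsilon>: "0 \<le> \<epsilon>"
    and past: "\<And>r. r \<in> {0..T0} \<Longrightarrow> r < \<tau> \<Longrightarrow> unobservable (\<phi> r)"
    and window: "\<And>r. r \<in> {0..T0} \<Longrightarrow> r \<le> \<tau> + \<delta> \<Longrightarrow> chain_bounded \<epsilon> (\<phi> r)"
    and t: "t \<in> {0..T0}" "t \<le> \<tau> + \<delta>" and r: "r \<in> {0..t}"
    and m: "m \<in> {1..k} \<rightarrow> {..<n}" and s: "\<forall>j\<le>k. 0 \<le> s j"
  shows "norm (C (opchain T N s m k (T (t - r) (\<Sum>i<n. u i r *\<^sub>R N i (\<phi> r)))))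
    \<le> chain_growth (Suc k) * \<epsilon> * (\<Sum>i<n. L * indicator {\<tau>..t} r + (u i r)^2 / L)"
proof -
  define s' where "s' = s(k := s k + (t - r), Suc k := 0)"
  define c where "c i = C (opchain T N s' (m(Suc k := i)) (Suc k) (\<phi> r))" for i
  have c: "norm (c i) \<le> chain_growth (Suc k) * \<epsilon> * indicator {\<tau>..t} r" if "i < n" for i
    unfolding c_def using m s r t that
    by (intro norm_C_opchain_window_le[OF \<epsilon> past window]) (auto simp: s'_def Pi_iff)
  \<comment> \<open>the first term is small on a short window, the second is integrable\<close>
  have u: "\<bar>u i r\<bar> * indicator {\<tau>..t} r \<le> L * indicator {\<tau>..t} r + (u i r)^2 / L" for i
    using abs_le_add_square_div[OF L] L by (cases "r \<in> {\<tau>..t}") auto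
  have "norm (C (opchain T N s m k (T (t - r) (\<Sum>i<n. u i r *\<^sub>R N i (\<phi> r)))))
      = norm (\<Sum>i<n. u i r *\<^sub>R c i)"
    using C_opchain_T_sum_N[OF m s] r by (simp add: s'_def c_def)
  also have "\<dots> \<le> (\<Sum>i<n. \<bar>u i r\<bar> * norm (c i))"
    by (rule order_trans[OF norm_sum]) simp
  also have "\<dots> \<le> (\<Sum>i<n. \<bar>u i r\<bar> * (chain_growth (Suc k) * \<epsilon> * indicator {\<tau>..t} r))"
    using c by (intro sum_mono mult_left_mono) auto
  also have "\<dots> = (\<Sum>i<n. chain_growth (Suc k) * \<epsilon> * (\<bar>u i r\<bar> * indicator {\<tau>..t} r))"
    by (simp add: mult_ac)
  also have "\<dots> \<le> (\<Sum>i<n. chain_growth (Suc k) * \<epsilon> * (L * indicator {\<tau>..t} r + (u i r)^2 / L))"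
    using u chain_growth_pos[of "Suc k"] \<epsilon> by (intro sum_mono mult_left_mono) auto
  also have "\<dots> = chain_growth (Suc k) * \<epsilon> * (\<Sum>i<n. L * indicator {\<tau>..t} r + (u i r)^2 / L)"
    by (simp add: sum_distrib_left)
  finally show ?thesis .
qed

lemma window_step:
  assumes \<tau>: "0 \<le> \<tau>" and \<delta>: "0 \<le> \<delta>" and \<epsilon>: "0 \<le> \<epsilon>" and L: "0 < L"
    and contraction: "M * N_bound * (real n * L * \<delta> + control_energy / L) \<le> 1 / 2"
    and past: "\<And>r. r \<in> {0..T0} \<Longrightarrow> r < \<tau> \<Longrightarrow> unobservable (\<phi> r)"
    and window: "\<And>r. r \<in> {0..T0} \<Longrightarrow> r \<le> \<tau> + \<delta> \<Longrightarrow> chain_bounded \<epsilon> (\<phi> r)"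
    and t: "t \<in> {0..T0}" "t \<le> \<tau> + \<delta>"
  shows "chain_bounded (\<epsilon> / 2) (\<phi> t)"
  unfolding chain_bounded_def
proof (intro allI impI)
  fix k m and s :: "nat \<Rightarrow> real" assume m: "m \<in> {1..k} \<rightarrow> {..<n}" and s: "\<forall>j\<le>k. 0 \<le> s j"
  define w where "w r = (\<Sum>i<n. L * indicator {\<tau>..t} r + (u i r)^2 / L)" for r
  define c where "c = chain_growth (Suc k) * \<epsilon>"
  have c: "0 \<le> c" using chain_growth_pos[of "Suc k"] \<epsilon> by (simp add: c_def)
  have bl: "bounded_linear (\<lambda>x. C (opchain T N s m k x))"
    using bounded_linear_compose[OF bounded_linear_C bounded_linear_opchain[OF m]] s by simp
  have "norm (C (opchain T N s m k (\<phi> t))) \<le> (\<integral>r. c * w r \<partial>lebesgue_on {0..t})"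
    unfolding C_opchain_mild[OF t(1) m s]
    using window_weight_integral(1)[OF \<tau> \<delta> t L] norm_Duhamel_integrand_le[OF L \<epsilon> past window t _ m s]
    by (intro norm_bounded_linear_integral_le[OF bl]) (auto simp: w_def c_def)
  also have "\<dots> = c * (\<integral>r. w r \<partial>lebesgue_on {0..t})" by simp
  also have "\<dots> \<le> c * (real n * L * \<delta> + control_energy / L)"
    using window_weight_integral(2)[OF \<tau> \<delta> t L] c by (intro mult_left_mono) (auto simp: w_def)
  also have "\<dots> = chain_growth k * \<epsilon> * (M * N_bound * (real n * L * \<delta> + control_energy / L))"
    by (simp add: c_def chain_growth_Suc mult_ac)
  also have "\<dots> \<le> chain_growth k * \<epsilon> * (1 / 2)"
    using contraction chain_growth_pos[of k] \<epsilon> by (intro mult_left_mono) auto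
  finally show "norm (C (opchain T N s m k (\<phi> t))) \<le> chain_growth k * (\<epsilon> / 2)" by simp
qed

lemma contraction_window_exists:
  obtains L \<delta> where "0 < L" "0 < \<delta>" "M * N_bound * (real n * L * \<delta> + control_energy / L) \<le> 1 / 2"
proof
  define K where "K = M * N_bound"
  have K: "0 < K" using M_ge_1 N_bound_pos by (simp add: K_def)
  define L where "L = 4 * K * (control_energy + 1)"
  define \<delta> where "\<delta> = 1 / (4 * K * (real n + 1) * L)"
  show L: "0 < L" using K control_energy_nonneg by (simp add: L_def add_nonneg_pos)
  show "0 < \<delta>" using K L by (simp add: \<delta>_def)
  have "K * (real n * L * \<delta>) = (real n * (K * L)) / (4 * (real n + 1) * (K * L))"
    by (simp add: \<delta>_def mult_ac)
  also have "\<dots> = real n / (4 * (real n + 1))"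
    using K L by simp
  also have "\<dots> \<le> 1 / 4" by (simp add: field_simps)
  finally have 1: "K * (real n * L * \<delta>) \<le> 1 / 4" .
  have "K * (control_energy / L) = (control_energy * K) / (4 * (control_energy + 1) * K)"
    by (simp add: L_def mult_ac)
  also have "\<dots> = control_energy / (4 * (control_energy + 1))"
    using K by simp
  also have "\<dots> \<le> 1 / 4" using control_energy_nonneg by (simp add: field_simps)
  finally have 2: "K * (control_energy / L) \<le> 1 / 4" .
  have "M * N_bound * (real n * L * \<delta> + control_energy / L)
      = K * (real n * L * \<delta>) + K * (control_energy / L)"
    by (simp add: K_def distrib_left)
  thus "M * N_bound * (real n * L * \<delta> + control_energy / L) \<le> 1 / 2"
    using 1 2 by linarith
qed

lemma unobservable_on_window:
  assumes \<tau>: "0 \<le> \<tau>" and \<delta>: "0 \<le> \<delta>" and L: "0 < L"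
    and contraction: "M * N_bound * (real n * L * \<delta> + control_energy / L) \<le> 1 / 2"
    and past: "\<And>r. r \<in> {0..T0} \<Longrightarrow> r < \<tau> \<Longrightarrow> unobservable (\<phi> r)"
    and t: "t \<in> {0..T0}" "t \<le> \<tau> + \<delta>"
  shows "unobservable (\<phi> t)"
proof -
  obtain D where D: "0 \<le> D" "\<And>t. t \<in> {0..T0} \<Longrightarrow> chain_bounded D (\<phi> t)"
    using chain_bounded_a_priori by blast
  have "\<forall>t\<in>{0..T0}. t \<le> \<tau> + \<delta> \<longrightarrow> chain_bounded (D / 2 ^ p) (\<phi> t)" for p
  proof (induction p)
    case 0
    thus ?case using D by simp
  next
    case (Suc p)
    have "chain_bounded (D / 2 ^ p / 2) (\<phi> t)" if "t \<in> {0..T0}" "t \<le> \<tau> + \<delta>" for t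
      by (rule window_step[OF \<tau> \<delta> _ L contraction past _ that]) (use Suc.IH D(1) in auto)
    thus ?case by (simp only: power_Suc2 divide_divide_eq_left) blast
  qed
  thus ?thesis using t by (intro unobservable_if_chain_bounded_halving) blast
qed

lemma unobservable_mild_solution:
  assumes t: "t \<in> {0..T0}"
  shows "unobservable (\<phi> t)"
proof -
  obtain L \<delta> where L: "0 < L" and \<delta>: "0 < \<delta>"
    and contraction: "M * N_bound * (real n * L * \<delta> + control_energy / L) \<le> 1 / 2"
    by (rule contraction_window_exists)
  have "\<forall>t\<in>{0..T0}. t < real j * \<delta> \<longrightarrow> unobservable (\<phi> t)" for j
  proof (induction j)
    case (Suc j)
    have "unobservable (\<phi> t)" if "t \<in> {0..T0}" "t \<le> real j * \<delta> + \<delta>" for t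
      using unobservable_on_window[OF _ _ L contraction _ that] Suc.IH \<delta> by simp
    thus ?case by (auto simp: distrib_right)
  qed simp
  moreover obtain j where "t / \<delta> < real j" using reals_Archimedean2 by blast
  hence "t < real j * \<delta>" using \<delta> by (simp add: field_simps)
  ultimately show ?thesis using t by blast
qed

end

theorem lemma2p4:
  fixes T :: "real \<Rightarrow> 'x::{real_inner, polish_space} \<Rightarrow> 'x"
    and N :: "nat \<Rightarrow> 'x \<Rightarrow> 'x"
    and C :: "'x \<Rightarrow> 'h::{real_inner, polish_space}"
    and n :: nat and M \<nu> T0 :: real
    and u :: "nat \<Rightarrow> real \<Rightarrow> real"
    and \<phi> :: "real \<Rightarrow> 'x" and \<phi>0 :: 'x
  assumes semigroup: "C0_semigroup T"
    and bound: "\<forall>t\<ge>0. onorm (T t) \<le> M * exp (- \<nu> * t)"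
    and M: "M \<ge> 1" and \<nu>: "\<nu> > 0"
    and N: "\<forall>i<n. bounded_linear (N i)"
    and C: "bounded_linear C"
    and small: "M\<^sup>2 * (sqrt (\<Sum>i<n. onorm (N i \<circ> adjoint (N i))))\<^sup>2 / (2 * \<nu>) < 1"
    and \<phi>0: "\<phi>0 \<in> obs_kernel C T N n"
    and T0: "T0 > 0"
    and u_meas: "\<forall>i<n. u i \<in> borel_measurable (lebesgue_on {0..T0})"
    and u_L2: "\<forall>i<n. integrable (lebesgue_on {0..T0}) (\<lambda>t. (u i t)\<^sup>2)"
    and \<phi>_cont: "continuous_on {0..T0} \<phi>"
    and mild: "\<forall>t\<in>{0..T0}. \<phi> t = T t \<phi>0 +
        (\<integral>s. T (t - s) (\<Sum>i<n. u i s *\<^sub>R N i (\<phi> s)) \<partial>(lebesgue_on {0..t}))"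
  shows "\<forall>t\<in>{0..T0}. C (\<phi> t) = 0"
proof -
  have system: "bilinear_system T M \<nu> N n C"
    by (rule bilinear_system.intro[OF exp_stable_semigroup.intro[OF semigroup bound M \<nu>]
          bilinear_system_axioms.intro[OF N[rule_format] C]])
  then interpret bilinear_system T M \<nu> N n C .
  have "unobservable \<phi>0"
    using small \<phi>0 Gamma_sq_nonneg by (intro unobservable_if_obs_kernel) (simp_all add: Gamma_sq_def)
  with system interpret mild_solution T M \<nu> N n C u T0 \<phi> \<phi>0
    by (intro mild_solution.intro mild_solution_axioms.intro[OF u_L2[rule_format] \<phi>_cont mild[rule_format]])
  show ?thesis using unobservable_mild_solution C_eq_0_if_unobservable by blast
qed

end
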